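(* There are ring homomorphisms $$\mathrm{B}(\mathbb{Z})\longrightarrow\mathrm{B}(\mathcal{R})\longrightarrow\mathrm{B}(\mathbb{Z})$$ whose composition is the identity of $\mathrm{B}(\mathbb{Z})$.
   Context: $\mathrm{B}(\mathbb{Z})$ is the Burnside ring of finite $\mathbb{Z}$-sets: the Grothendieck ring of isomorphism classes of pairs $(X,\pi)$ with $X$ a finite set and $\pi$ a permutation of $X$, with addition induced by disjoint union and multiplication by cartesian product (with permutation $\pi\times\pi'$). A rack is a set $R$ with a binary operation $\rhd$ such that every left multiplication $\ell_a\colon b\mapsto a\rhd b$ is a bijection and $a\rhd(b\rhd c)=(a\rhd b)\rhd(a\rhd c)$ for all $a,b,c$. A subrack is a subset $S$ with $\ell_s(S)=S$ for all $s\in S$; a decomposition of $R$ into $S$ and $T$ means $S,T$ are disjoint subracks (possibly empty) with $S\cup T=R$. The Burnside ring of finite racks $\mathrm{B}(\mathcal{R})$ is the abelian group generated by symbols $b(R)$, one for each finite rack $R$, subject to $b(R_1)=b(R_2)$ whenever $R_1\cong R_2$ and $b(R)=b(S)+b(T)$ whenever $R$ decomposes into $S$ and $T$, with ring structure $b(R)b(R')=b(R\times R')$ (cartesian product, componentwise operation) and unit the class of the singleton. *)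

theory Defs
  imports Main "HOL-Algebra.Ring" "HOL-Library.Nat_Bijection"
begin

text \<open>Given a class of finite objects (predicate valid), an isomorphism relation,
 a decomposition relation (decomp X S T: X decomposes into S and T), a product and a unit,
 we form the abelian group generated by symbols b(X) (finitely supported integer-valued
 functions on objects), modulo the subgroup generated by b(X) - b(Y) for X iso Y and
 b(X) - b(S) - b(T) for decompositions, with multiplication induced by the product.\<close>

definition delta :: "'o \<Rightarrow> 'o \<Rightarrow> int" where
  "delta X = (\<lambda>Y. if Y = X then 1 else 0)"

definition fsupp :: "('o \<Rightarrow> bool) \<Rightarrow> ('o \<Rightarrow> int) set" where
  "fsupp valid = {f. finite {x. f x \<noteq> 0} \<and> (\<forall>x. f x \<noteq> 0 \<longrightarrow> valid x)}"

inductive_set relsub :: "('o \<Rightarrow> bool) \<Rightarrow> ('o \<Rightarrow> 'o \<Rightarrow> bool) \<Rightarrow> ('o \<Rightarrow> 'o \<Rightarrow> 'o \<Rightarrow> bool)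
    \<Rightarrow> ('o \<Rightarrow> int) set"
  for valid isom decomp where
  rel_zero: "(\<lambda>_. 0) \<in> relsub valid isom decomp"
| rel_iso: "valid X \<Longrightarrow> valid Y \<Longrightarrow> isom X Y \<Longrightarrow> (\<lambda>Z. delta X Z - delta Y Z) \<in> relsub valid isom decomp"
| rel_decomp: "valid X \<Longrightarrow> valid S \<Longrightarrow> valid T \<Longrightarrow> decomp X S T \<Longrightarrow>
      (\<lambda>Z. delta X Z - delta S Z - delta T Z) \<in> relsub valid isom decomp"
| rel_diff: "a \<in> relsub valid isom decomp \<Longrightarrow> b \<in> relsub valid isom decomp \<Longrightarrow>
      (\<lambda>Z. a Z - b Z) \<in> relsub valid isom decomp"

definition conv :: "('o \<Rightarrow> 'o \<Rightarrow> 'o) \<Rightarrow> ('o \<Rightarrow> int) \<Rightarrow> ('o \<Rightarrow> int) \<Rightarrow> ('o \<Rightarrow> int)" where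
  "conv prd a b = (\<lambda>Z. \<Sum>(X,Y) \<in> {(X,Y). a X \<noteq> 0 \<and> b Y \<noteq> 0 \<and> prd X Y = Z}. a X * b Y)"

definition bclass :: "('o \<Rightarrow> bool) \<Rightarrow> ('o \<Rightarrow> 'o \<Rightarrow> bool) \<Rightarrow> ('o \<Rightarrow> 'o \<Rightarrow> 'o \<Rightarrow> bool)
    \<Rightarrow> ('o \<Rightarrow> int) \<Rightarrow> ('o \<Rightarrow> int) set" where
  "bclass valid isom decomp a = {b \<in> fsupp valid. (\<lambda>Z. a Z - b Z) \<in> relsub valid isom decomp}"

definition burnside_ring :: "('o \<Rightarrow> bool) \<Rightarrow> ('o \<Rightarrow> 'o \<Rightarrow> bool) \<Rightarrow> ('o \<Rightarrow> 'o \<Rightarrow> 'o \<Rightarrow> bool)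
    \<Rightarrow> ('o \<Rightarrow> 'o \<Rightarrow> 'o) \<Rightarrow> 'o \<Rightarrow> (('o \<Rightarrow> int) set) ring" where
  "burnside_ring valid isom decomp prd u =
    (let cl = bclass valid isom decomp;
         rep = (\<lambda>A. SOME a. a \<in> A) in
     \<lparr> carrier = cl ` fsupp valid,
       monoid.mult = (\<lambda>A B. cl (conv prd (rep A) (rep B))),
       one = cl (delta u),
       zero = cl (\<lambda>_. 0),
       add = (\<lambda>A B. cl (\<lambda>Z. rep A Z + rep B Z)) \<rparr>)"

text \<open>A finite Z-set is represented as (X, p) with X a finite set of naturals and p a
 permutation of X (values of p outside X are irrelevant; representations differing
 only there are isomorphic).\<close>

type_synonym zset = "nat set \<times> (nat \<Rightarrow> nat)"

definition zset_valid :: "zset \<Rightarrow> bool" where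
  "zset_valid A = (finite (fst A) \<and> bij_betw (snd A) (fst A) (fst A))"

definition zset_iso :: "zset \<Rightarrow> zset \<Rightarrow> bool" where
  "zset_iso A B = (\<exists>f. bij_betw f (fst A) (fst B) \<and>
      (\<forall>x\<in>fst A. f (snd A x) = snd B (f x)))"

definition zset_decomp :: "zset \<Rightarrow> zset \<Rightarrow> zset \<Rightarrow> bool" where
  "zset_decomp X S T = (fst S \<inter> fst T = {} \<and> fst S \<union> fst T = fst X \<and>
      snd X ` fst S = fst S \<and> snd X ` fst T = fst T \<and>
      snd S = snd X \<and> snd T = snd X)"

definition zset_prod :: "zset \<Rightarrow> zset \<Rightarrow> zset" where
  "zset_prod A B = (prod_encode ` (fst A \<times> fst B),
      (\<lambda>n. case prod_decode n of (x, y) \<Rightarrow> prod_encode (snd A x, snd B y)))"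

definition zset_unit :: zset where
  "zset_unit = ({0}, id)"

definition BZ :: "((zset \<Rightarrow> int) set) ring" where
  "BZ = burnside_ring zset_valid zset_iso zset_decomp zset_prod zset_unit"

type_synonym rack = "nat set \<times> (nat \<Rightarrow> nat \<Rightarrow> nat)"

definition rack_valid :: "rack \<Rightarrow> bool" where
  "rack_valid R = (finite (fst R) \<and>
      (\<forall>a\<in>fst R. bij_betw (snd R a) (fst R) (fst R)) \<and>
      (\<forall>a\<in>fst R. \<forall>b\<in>fst R. \<forall>c\<in>fst R.
          snd R a (snd R b c) = snd R (snd R a b) (snd R a c)))"

definition rack_iso :: "rack \<Rightarrow> rack \<Rightarrow> bool" where
  "rack_iso R Q = (\<exists>f. bij_betw f (fst R) (fst Q) \<and>
      (\<forall>a\<in>fst R. \<forall>b\<in>fst R. f (snd R a b) = snd Q (f a) (f b)))"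

definition is_subrack :: "rack \<Rightarrow> nat set \<Rightarrow> bool" where
  "is_subrack R S = (S \<subseteq> fst R \<and> (\<forall>s\<in>S. snd R s ` S = S))"

definition rack_decomp :: "rack \<Rightarrow> rack \<Rightarrow> rack \<Rightarrow> bool" where
  "rack_decomp R S T = (is_subrack R (fst S) \<and> is_subrack R (fst T) \<and>
      fst S \<inter> fst T = {} \<and> fst S \<union> fst T = fst R \<and>
      snd S = snd R \<and> snd T = snd R)"

definition rack_prod :: "rack \<Rightarrow> rack \<Rightarrow> rack" where
  "rack_prod R Q = (prod_encode ` (fst R \<times> fst Q),
      (\<lambda>n m. case prod_decode n of (a, a') \<Rightarrow> case prod_decode m of (b, b') \<Rightarrow>
          prod_encode (snd R a b, snd Q a' b')))"

definition rack_unit :: rack where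
  "rack_unit = ({0}, (\<lambda>_ _. 0))"

definition BR :: "((rack \<Rightarrow> int) set) ring" where
  "BR = burnside_ring rack_valid rack_iso rack_decomp rack_prod rack_unit"

end

theory Submission
  imports Defs
begin

(* A finite Z-set (X, pi) is a rack under a |> b = pi b, and every finite rack carries the
   permutation a |> a of its underlying set: self-distributivity gives (a |> a) |> x = a |> x,
   so a |> a = b |> b forces a |> b = a |> a, hence a = b; by finiteness the diagonal is then
   a bijection of every subrack onto itself. Both constructions respect isomorphisms,
   decompositions and products and send the unit to the unit, and the diagonal of the rack
   of (X, pi) is pi again. Any such map of objects extends to the Burnside rings by pushing
   forward finitely supported integer functions: the relations are sent to relations, and the
   product of formal sums is the pushforward of their tensor product along the product of
   objects, so multiplicativity reduces to functoriality of pushforward. *)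

section \<open>Finitely supported integer functions\<close>

definition supp :: "('o \<Rightarrow> int) \<Rightarrow> 'o set" where
  "supp a = {x. a x \<noteq> 0}"

definition pushforward :: "('o \<Rightarrow> 'p) \<Rightarrow> ('o \<Rightarrow> int) \<Rightarrow> 'p \<Rightarrow> int" where
  "pushforward \<phi> a W = (\<Sum>X | a X \<noteq> 0 \<and> \<phi> X = W. a X)"

definition tensor :: "('o \<Rightarrow> int) \<Rightarrow> ('p \<Rightarrow> int) \<Rightarrow> 'o \<times> 'p \<Rightarrow> int" where
  "tensor a b = (\<lambda>(X, Y). a X * b Y)"

lemma fsupp_iff: "a \<in> fsupp v \<longleftrightarrow> finite (supp a) \<and> (\<forall>X\<in>supp a. v X)"
  by (auto simp: fsupp_def supp_def)

lemma delta_same [simp]: "delta X X = 1"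
  by (simp add: delta_def)

lemma supp_delta [simp]: "supp (delta X) = {X}"
  by (simp add: supp_def delta_def)

lemma supp_diff: "supp (\<lambda>Z. a Z - b Z) \<subseteq> supp a \<union> supp b"
  by (auto simp: supp_def)

lemma supp_add: "supp (\<lambda>Z. a Z + b Z) \<subseteq> supp a \<union> supp b"
  by (auto simp: supp_def)

lemma fsupp_add: "a \<in> fsupp v \<Longrightarrow> b \<in> fsupp v \<Longrightarrow> (\<lambda>Z. a Z + b Z) \<in> fsupp v"
  using supp_add[of a b] by (auto simp: fsupp_iff intro: finite_subset)

lemma supp_tensor [simp]: "supp (tensor a b) = supp a \<times> supp b"
  by (auto simp: supp_def tensor_def)

lemma pushforward_eq_sum:
  assumes "finite S" "supp a \<subseteq> S"
  shows "pushforward \<phi> a W = (\<Sum>X | X \<in> S \<and> \<phi> X = W. a X)"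
  unfolding pushforward_def
  by (rule sum.mono_neutral_left) (use assms in \<open>auto simp: supp_def\<close>)

lemma pushforward_eq_sum_delta:
  assumes "finite S" "supp a \<subseteq> S"
  shows "pushforward \<phi> a = (\<lambda>W. \<Sum>X\<in>S. a X * delta (\<phi> X) W)"
proof
  fix W
  have "(\<Sum>X\<in>S. a X * delta (\<phi> X) W) = (\<Sum>X\<in>S. if \<phi> X = W then a X else 0)"
    by (rule sum.cong) (auto simp: delta_def)
  then show "pushforward \<phi> a W = (\<Sum>X\<in>S. a X * delta (\<phi> X) W)"
    using assms by (simp add: pushforward_eq_sum sum.inter_filter)
qed

lemma supp_pushforward: "supp (pushforward \<phi> a) \<subseteq> \<phi> ` supp a"
proof
  fix W assume "W \<in> supp (pushforward \<phi> a)"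
  then have "pushforward \<phi> a W \<noteq> 0"
    by (simp add: supp_def)
  then have "{X. a X \<noteq> 0 \<and> \<phi> X = W} \<noteq> {}"
    unfolding pushforward_def by force
  then obtain X where "a X \<noteq> 0" "\<phi> X = W"
    by blast
  then show "W \<in> \<phi> ` supp a"
    by (auto simp: supp_def)
qed

lemma pushforward_cong:
  "(\<And>X. X \<in> supp a \<Longrightarrow> \<phi> X = \<psi> X) \<Longrightarrow> pushforward \<phi> a = pushforward \<psi> a"
  unfolding pushforward_def supp_def by (intro ext sum.cong) auto

lemma pushforward_id: "pushforward id a = a"
proof
  fix W
  have "{X. a X \<noteq> 0 \<and> id X = W} = (if a W = 0 then {} else {W})"
    by auto
  then show "pushforward id a W = a W"
    by (simp add: pushforward_def)
qed

lemma pushforward_delta: "pushforward \<phi> (delta X) = delta (\<phi> X)"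
  by (rule ext) (simp add: pushforward_eq_sum_delta[of "{X}"])

lemma pushforward_diff:
  assumes "finite (supp a)" "finite (supp b)"
  shows "pushforward \<phi> (\<lambda>Z. a Z - b Z) = (\<lambda>W. pushforward \<phi> a W - pushforward \<phi> b W)"
  using supp_diff[of a b] assms
  by (simp add: pushforward_eq_sum_delta[of "supp a \<union> supp b"] left_diff_distrib sum_subtractf)

lemma pushforward_add:
  assumes "finite (supp a)" "finite (supp b)"
  shows "pushforward \<phi> (\<lambda>Z. a Z + b Z) = (\<lambda>W. pushforward \<phi> a W + pushforward \<phi> b W)"
  using supp_add[of a b] assms
  by (simp add: pushforward_eq_sum_delta[of "supp a \<union> supp b"] distrib_right sum.distrib)

lemma pushforward_comp:
  assumes "finite (supp a)"
  shows "pushforward \<psi> (pushforward \<phi> a) = pushforward (\<psi> \<circ> \<phi>) a"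
proof
  fix W
  let ?T = "{Y. Y \<in> \<phi> ` supp a \<and> \<psi> Y = W}" and ?S = "{X. X \<in> supp a \<and> \<psi> (\<phi> X) = W}"
  have "pushforward \<psi> (pushforward \<phi> a) W = (\<Sum>Y\<in>?T. pushforward \<phi> a Y)"
    using assms by (simp add: pushforward_eq_sum[OF _ supp_pushforward])
  also have "\<dots> = (\<Sum>Y\<in>?T. \<Sum>X | X \<in> ?S \<and> \<phi> X = Y. a X)"
    by (intro sum.cong) (auto simp: pushforward_eq_sum[OF assms order_refl] intro: sum.cong)
  also have "\<dots> = (\<Sum>X\<in>?S. a X)"
    by (rule sum.group) (use assms in auto)
  also have "\<dots> = pushforward (\<psi> \<circ> \<phi>) a W"
    by (simp add: pushforward_eq_sum[OF assms order_refl])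
  finally show "pushforward \<psi> (pushforward \<phi> a) W = pushforward (\<psi> \<circ> \<phi>) a W" .
qed

lemma pushforward_tensor:
  assumes "finite (supp a)" "finite (supp b)"
  shows "pushforward (map_prod \<phi> \<psi>) (tensor a b) = tensor (pushforward \<phi> a) (pushforward \<psi> b)"
proof (rule ext, clarify)
  fix W V
  let ?A = "{X \<in> supp a. \<phi> X = W}" and ?B = "{Y \<in> supp b. \<psi> Y = V}"
  have "{Q. Q \<in> supp a \<times> supp b \<and> map_prod \<phi> \<psi> Q = (W, V)} = ?A \<times> ?B"
    by auto
  then have "pushforward (map_prod \<phi> \<psi>) (tensor a b) (W, V) = (\<Sum>Q\<in>?A \<times> ?B. tensor a b Q)"
    using assms by (simp add: pushforward_eq_sum[of "supp a \<times> supp b"])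
  also have "\<dots> = (\<Sum>(X, Y)\<in>?A \<times> ?B. a X * b Y)"
    by (simp add: tensor_def)
  also have "\<dots> = (\<Sum>X\<in>?A. a X) * (\<Sum>Y\<in>?B. b Y)"
    by (simp only: sum_product sum.cartesian_product)
  also have "\<dots> = tensor (pushforward \<phi> a) (pushforward \<psi> b) (W, V)"
    using assms by (simp add: pushforward_eq_sum[OF _ order_refl] tensor_def)
  finally show "pushforward (map_prod \<phi> \<psi>) (tensor a b) (W, V)
      = tensor (pushforward \<phi> a) (pushforward \<psi> b) (W, V)" .
qed

lemma pushforward_apply_inj:
  assumes "inj \<phi>"
  shows "pushforward \<phi> a (\<phi> X) = a X"
proof -
  have "{X'. a X' \<noteq> 0 \<and> \<phi> X' = \<phi> X} = (if a X = 0 then {} else {X})"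
    using assms by (auto dest: injD)
  then show ?thesis
    by (simp add: pushforward_def)
qed

lemma pushforward_outside_range: "W \<notin> range \<phi> \<Longrightarrow> pushforward \<phi> a W = 0"
  by (auto simp: pushforward_def intro: sum.neutral)

lemma tensor_swap: "tensor b a = pushforward prod.swap (tensor a b)"
proof (rule ext, clarify)
  fix Y X
  have "pushforward prod.swap (tensor a b) (prod.swap (X, Y)) = tensor a b (X, Y)"
    by (rule pushforward_apply_inj) simp
  then show "tensor b a (Y, X) = pushforward prod.swap (tensor a b) (Y, X)"
    by (simp add: tensor_def)
qed

lemma tensor_delta_left: "tensor (delta X) b = pushforward (Pair X) b"
proof (rule ext, clarify)
  fix X' Y
  show "tensor (delta X) b (X', Y) = pushforward (Pair X) b (X', Y)"
  proof (cases "X' = X")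
    case True
    then show ?thesis
      using pushforward_apply_inj[of "Pair X" b Y] by (simp add: tensor_def inj_on_def)
  next
    case False
    then show ?thesis
      by (subst pushforward_outside_range) (auto simp: tensor_def delta_def)
  qed
qed

lemma tensor_diff_left: "tensor (\<lambda>Z. a Z - a' Z) b = (\<lambda>P. tensor a b P - tensor a' b P)"
  by (auto simp: tensor_def left_diff_distrib)

lemma tensor_diff_right: "tensor a (\<lambda>Z. b Z - b' Z) = (\<lambda>P. tensor a b P - tensor a b' P)"
  by (auto simp: tensor_def right_diff_distrib)

lemma conv_eq_pushforward_tensor: "conv p a b = pushforward (case_prod p) (tensor a b)"
proof
  fix Z
  have "{(X, Y). a X \<noteq> 0 \<and> b Y \<noteq> 0 \<and> p X Y = Z} = {P. tensor a b P \<noteq> 0 \<and> case_prod p P = Z}"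
    by (auto simp: tensor_def)
  then show "conv p a b Z = pushforward (case_prod p) (tensor a b) Z"
    unfolding conv_def pushforward_def by (simp add: tensor_def)
qed

lemma conv_diff_left:
  assumes "finite (supp a)" "finite (supp a')" "finite (supp b)"
  shows "conv p (\<lambda>Z. a Z - a' Z) b = (\<lambda>Z. conv p a b Z - conv p a' b Z)"
  using assms by (simp add: conv_eq_pushforward_tensor tensor_diff_left pushforward_diff)

lemma conv_diff_right:
  assumes "finite (supp a)" "finite (supp b)" "finite (supp b')"
  shows "conv p a (\<lambda>Z. b Z - b' Z) = (\<lambda>Z. conv p a b Z - conv p a b' Z)"
  using assms by (simp add: conv_eq_pushforward_tensor tensor_diff_right pushforward_diff)

lemma conv_delta_left:
  assumes "finite (supp b)"
  shows "conv p (delta X) b = pushforward (p X) b"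
  using assms by (simp add: conv_eq_pushforward_tensor tensor_delta_left pushforward_comp comp_def)

lemma conv_swap:
  assumes "finite (supp a)" "finite (supp b)"
  shows "conv p b a = pushforward (\<lambda>(X, Y). p Y X) (tensor a b)"
proof -
  have "case_prod p \<circ> prod.swap = (\<lambda>(X, Y). p Y X)"
    by auto
  then show ?thesis
    unfolding conv_eq_pushforward_tensor tensor_swap[of b a]
    using assms by (simp add: pushforward_comp)
qed

lemma pushforward_conv:
  assumes "finite (supp a)" "finite (supp b)"
    and "\<And>X Y. X \<in> supp a \<Longrightarrow> Y \<in> supp b \<Longrightarrow> \<phi> (p X Y) = q (\<phi> X) (\<phi> Y)"
  shows "pushforward \<phi> (conv p a b) = conv q (pushforward \<phi> a) (pushforward \<phi> b)"
proof -
  have "pushforward \<phi> (conv p a b) = pushforward (\<phi> \<circ> case_prod p) (tensor a b)"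
    using assms(1,2) by (simp add: conv_eq_pushforward_tensor pushforward_comp)
  also have "\<dots> = pushforward (case_prod q \<circ> map_prod \<phi> \<phi>) (tensor a b)"
    using assms(3) by (intro pushforward_cong) auto
  also have "\<dots> = pushforward (case_prod q) (pushforward (map_prod \<phi> \<phi>) (tensor a b))"
    using assms(1,2) by (simp add: pushforward_comp)
  also have "\<dots> = conv q (pushforward \<phi> a) (pushforward \<phi> b)"
    using assms(1,2) by (simp add: conv_eq_pushforward_tensor pushforward_tensor)
  finally show ?thesis .
qed

section \<open>Burnside rings presented by generators and relations\<close>

lemma relsub_fsupp: "r \<in> relsub v i d \<Longrightarrow> r \<in> fsupp v"
proof (induction rule: relsub.induct)
  case rel_zero
  then show ?case by (simp add: fsupp_iff supp_def)
next
  case (rel_iso X Y)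
  have "supp (\<lambda>Z. delta X Z - delta Y Z) \<subseteq> {X, Y}"
    by (auto simp: supp_def delta_def)
  with rel_iso show ?case
    by (auto simp: fsupp_iff intro: finite_subset)
next
  case (rel_decomp X S T)
  have "supp (\<lambda>Z. delta X Z - delta S Z - delta T Z) \<subseteq> {X, S, T}"
    by (auto simp: supp_def delta_def)
  with rel_decomp show ?case
    by (auto simp: fsupp_iff intro: finite_subset)
next
  case (rel_diff a b)
  then show ?case
    using supp_diff[of a b] finite_subset[OF supp_diff[of a b]] by (fastforce simp: fsupp_iff)
qed

lemma relsub_uminus: "r \<in> relsub v i d \<Longrightarrow> (\<lambda>Z. - r Z) \<in> relsub v i d"
  using relsub.rel_diff[OF relsub.rel_zero] by simp

lemma relsub_add:
  "r \<in> relsub v i d \<Longrightarrow> s \<in> relsub v i d \<Longrightarrow> (\<lambda>Z. r Z + s Z) \<in> relsub v i d"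
  using relsub.rel_diff[OF _ relsub_uminus, of r v i d s] by simp

lemma relsub_smult: "r \<in> relsub v i d \<Longrightarrow> (\<lambda>Z. c * r Z) \<in> relsub v i d"
proof (induction c rule: int_induct[where k = 0])
  case base
  then show ?case by (simp add: relsub.rel_zero)
next
  case (step1 c)
  then show ?case
    using relsub_add[of "\<lambda>Z. c * r Z" v i d r] by (simp add: distrib_right)
next
  case (step2 c)
  then show ?case
    using relsub.rel_diff[of "\<lambda>Z. c * r Z" v i d r] by (simp add: left_diff_distrib)
qed

lemma relsub_lincomb:
  assumes "finite K" "\<And>k. k \<in> K \<Longrightarrow> f k \<in> relsub v i d"
  shows "(\<lambda>Z. \<Sum>k\<in>K. c k * f k Z) \<in> relsub v i d"
  using assms
proof (induction K rule: finite_induct)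
  case empty
  then show ?case by (simp add: relsub.rel_zero)
next
  case (insert k K)
  have "(\<lambda>Z. c k * f k Z) \<in> relsub v i d"
    by (rule relsub_smult) (simp add: insert.prems)
  from relsub_add[OF this insert.IH] insert show ?case
    by simp
qed

lemma pushforward_diff_relsub:
  assumes "c \<in> fsupp w"
    and "\<And>P. w P \<Longrightarrow> (\<lambda>Z. delta (f P) Z - delta (g P) Z) \<in> relsub v i d"
  shows "(\<lambda>Z. pushforward f c Z - pushforward g c Z) \<in> relsub v i d"
proof -
  have c: "finite (supp c)" "\<forall>P\<in>supp c. w P"
    using assms(1) by (simp_all add: fsupp_iff)
  then have "(\<lambda>Z. pushforward f c Z - pushforward g c Z)
      = (\<lambda>Z. \<Sum>P\<in>supp c. c P * (delta (f P) Z - delta (g P) Z))"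
    by (simp add: pushforward_eq_sum_delta[OF _ order_refl] right_diff_distrib sum_subtractf)
  also have "\<dots> \<in> relsub v i d"
    using c assms(2) by (intro relsub_lincomb) auto
  finally show ?thesis .
qed

lemma pushforward_diff_diff_relsub:
  assumes "c \<in> fsupp w"
    and "\<And>P. w P \<Longrightarrow> (\<lambda>Z. delta (f P) Z - delta (g P) Z - delta (h P) Z) \<in> relsub v i d"
  shows "(\<lambda>Z. pushforward f c Z - pushforward g c Z - pushforward h c Z) \<in> relsub v i d"
proof -
  have c: "finite (supp c)" "\<forall>P\<in>supp c. w P"
    using assms(1) by (simp_all add: fsupp_iff)
  then have "(\<lambda>Z. pushforward f c Z - pushforward g c Z - pushforward h c Z)
      = (\<lambda>Z. \<Sum>P\<in>supp c. c P * (delta (f P) Z - delta (g P) Z - delta (h P) Z))"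
    by (simp add: pushforward_eq_sum_delta[OF _ order_refl] right_diff_distrib sum_subtractf)
  also have "\<dots> \<in> relsub v i d"
    using c assms(2) by (intro relsub_lincomb) auto
  finally show ?thesis .
qed

lemma bclass_eqI:
  assumes "(\<lambda>Z. a Z - b Z) \<in> relsub valid isom decomp"
  shows "bclass valid isom decomp a = bclass valid isom decomp b"
proof -
  have "(\<lambda>Z. a Z - c Z) \<in> relsub valid isom decomp \<longleftrightarrow> (\<lambda>Z. b Z - c Z) \<in> relsub valid isom decomp"
    for c
    using relsub.rel_diff[OF _ assms, of "\<lambda>Z. a Z - c Z"] relsub_add[OF assms, of "\<lambda>Z. b Z - c Z"]
    by auto
  then show ?thesis
    by (simp add: bclass_def)
qed

lemma some_in_bclass:
  assumes "a \<in> fsupp valid"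
  obtains "(SOME c. c \<in> bclass valid isom decomp a) \<in> fsupp valid"
    and "(\<lambda>Z. a Z - (SOME c. c \<in> bclass valid isom decomp a) Z) \<in> relsub valid isom decomp"
proof -
  have "a \<in> bclass valid isom decomp a"
    using assms relsub.rel_zero by (simp add: bclass_def)
  then have "(SOME c. c \<in> bclass valid isom decomp a) \<in> bclass valid isom decomp a"
    by (rule someI[where P = "\<lambda>c. c \<in> bclass valid isom decomp a"])
  then show ?thesis
    using that by (simp add: bclass_def)
qed

lemma burnside_ring_carrier:
  "carrier (burnside_ring valid isom decomp prd u) = bclass valid isom decomp ` fsupp valid"
  by (simp add: burnside_ring_def Let_def)

lemma burnside_ring_one:
  "\<one>\<^bsub>burnside_ring valid isom decomp prd u\<^esub> = bclass valid isom decomp (delta u)"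
  by (simp add: burnside_ring_def Let_def)

lemma burnside_ring_add_bclass:
  assumes "a \<in> fsupp valid" "b \<in> fsupp valid"
  shows "bclass valid isom decomp a \<oplus>\<^bsub>burnside_ring valid isom decomp prd u\<^esub> bclass valid isom decomp b
    = bclass valid isom decomp (\<lambda>Z. a Z + b Z)"
proof -
  let ?R = "relsub valid isom decomp"
  define a' where "a' = (SOME c. c \<in> bclass valid isom decomp a)"
  define b' where "b' = (SOME c. c \<in> bclass valid isom decomp b)"
  have "(\<lambda>Z. a Z - a' Z) \<in> ?R" "(\<lambda>Z. b Z - b' Z) \<in> ?R"
    unfolding a'_def b'_def using some_in_bclass assms by metis+
  from relsub_uminus[OF relsub_add[OF this]]
  have "(\<lambda>Z. (a' Z + b' Z) - (a Z + b Z)) \<in> ?R"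
    by (simp add: algebra_simps)
  then show ?thesis
    unfolding a'_def b'_def by (simp add: burnside_ring_def Let_def bclass_eqI)
qed

(* Compatibility of products with isomorphisms and decompositions is only required in the left
   factor; commutativity up to isomorphism supplies the right one (conv_relsub_right). *)
locale burnside_data =
  fixes valid :: "'o \<Rightarrow> bool" and isom :: "'o \<Rightarrow> 'o \<Rightarrow> bool"
    and decomp :: "'o \<Rightarrow> 'o \<Rightarrow> 'o \<Rightarrow> bool" and prd :: "'o \<Rightarrow> 'o \<Rightarrow> 'o" and u :: 'o
  assumes valid_prod: "valid X \<Longrightarrow> valid Y \<Longrightarrow> valid (prd X Y)"
    and valid_unit: "valid u"
    and isom_prod_commute: "valid X \<Longrightarrow> valid Y \<Longrightarrow> isom (prd X Y) (prd Y X)"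
    and isom_prod_left: "valid X \<Longrightarrow> valid Y \<Longrightarrow> valid W \<Longrightarrow> isom X Y \<Longrightarrow> isom (prd X W) (prd Y W)"
    and decomp_prod_left: "valid X \<Longrightarrow> valid S \<Longrightarrow> valid T \<Longrightarrow> valid W \<Longrightarrow> decomp X S T \<Longrightarrow>
      decomp (prd X W) (prd S W) (prd T W)"
begin

abbreviation (input) R where "R \<equiv> relsub valid isom decomp"

lemma conv_fsupp:
  assumes "a \<in> fsupp valid" "b \<in> fsupp valid"
  shows "conv prd a b \<in> fsupp valid"
proof -
  have sub: "supp (conv prd a b) \<subseteq> case_prod prd ` (supp a \<times> supp b)"
    using supp_pushforward[of "case_prod prd" "tensor a b"] by (simp add: conv_eq_pushforward_tensor)
  have fin: "finite (supp a)" "finite (supp b)" and val: "\<forall>X\<in>supp a \<union> supp b. valid X"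
    using assms by (auto simp: fsupp_iff)
  have "valid Z" if "Z \<in> supp (conv prd a b)" for Z
    using subsetD[OF sub that] val by (auto intro: valid_prod)
  with fin sub show ?thesis
    unfolding fsupp_iff by (auto intro: finite_subset)
qed

lemma conv_relsub_left:
  assumes "r \<in> R" "b \<in> fsupp valid"
  shows "conv prd r b \<in> R"
  using assms(1)
proof (induction rule: relsub.induct)
  case rel_zero
  then show ?case by (simp add: conv_def relsub.rel_zero)
next
  case (rel_iso X Y)
  have "finite (supp b)"
    using assms(2) by (simp add: fsupp_iff)
  then have "conv prd (\<lambda>Z. delta X Z - delta Y Z) b
      = (\<lambda>Z. pushforward (prd X) b Z - pushforward (prd Y) b Z)"
    by (simp add: conv_diff_left conv_delta_left)
  also have "\<dots> \<in> R"
    using assms(2)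
    by (rule pushforward_diff_relsub) (simp add: rel_iso relsub.rel_iso valid_prod isom_prod_left)
  finally show ?case .
next
  case (rel_decomp X S T)
  have "finite (supp b)"
    using assms(2) by (simp add: fsupp_iff)
  then have "conv prd (\<lambda>Z. delta X Z - delta S Z - delta T Z) b
      = (\<lambda>Z. pushforward (prd X) b Z - pushforward (prd S) b Z - pushforward (prd T) b Z)"
    by (simp add: conv_diff_left conv_delta_left finite_subset[OF supp_diff])
  also have "\<dots> \<in> R"
    using assms(2)
    by (rule pushforward_diff_diff_relsub) (simp add: rel_decomp relsub.rel_decomp valid_prod decomp_prod_left)
  finally show ?case .
next
  case (rel_diff a c)
  have "finite (supp a)" "finite (supp c)" "finite (supp b)"
    using assms(2) relsub_fsupp[OF rel_diff.hyps(1)] relsub_fsupp[OF rel_diff.hyps(2)]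
    by (simp_all add: fsupp_iff)
  then show ?case
    using rel_diff.IH by (simp add: conv_diff_left relsub.rel_diff)
qed

lemma conv_commute_relsub:
  assumes "a \<in> fsupp valid" "b \<in> fsupp valid"
  shows "(\<lambda>Z. conv prd a b Z - conv prd b a Z) \<in> R"
proof -
  have "tensor a b \<in> fsupp (\<lambda>(X, Y). valid X \<and> valid Y)"
    using assms by (auto simp: fsupp_iff)
  then have "(\<lambda>Z. pushforward (case_prod prd) (tensor a b) Z
      - pushforward (\<lambda>(X, Y). prd Y X) (tensor a b) Z) \<in> R"
    by (rule pushforward_diff_relsub) (auto intro: relsub.rel_iso valid_prod isom_prod_commute)
  moreover have "finite (supp a)" "finite (supp b)"
    using assms by (simp_all add: fsupp_iff)
  ultimately show ?thesis
    by (simp add: conv_swap conv_eq_pushforward_tensor[of prd a b])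
qed

lemma conv_relsub_right:
  assumes "r \<in> R" "b \<in> fsupp valid"
  shows "conv prd b r \<in> R"
proof -
  have "(\<lambda>Z. (conv prd b r Z - conv prd r b Z) + conv prd r b Z) \<in> R"
    using assms relsub_fsupp
    by (intro relsub_add conv_commute_relsub conv_relsub_left) auto
  then show ?thesis
    by simp
qed

lemma burnside_ring_mult_bclass:
  assumes "a \<in> fsupp valid" "b \<in> fsupp valid"
  shows "bclass valid isom decomp a \<otimes>\<^bsub>burnside_ring valid isom decomp prd u\<^esub> bclass valid isom decomp b
    = bclass valid isom decomp (conv prd a b)"
proof -
  define a' where "a' = (SOME c. c \<in> bclass valid isom decomp a)"
  define b' where "b' = (SOME c. c \<in> bclass valid isom decomp b)"
  have a': "a' \<in> fsupp valid" "(\<lambda>Z. a Z - a' Z) \<in> R"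
    unfolding a'_def using some_in_bclass assms(1) by metis+
  have b': "b' \<in> fsupp valid" "(\<lambda>Z. b Z - b' Z) \<in> R"
    unfolding b'_def using some_in_bclass assms(2) by metis+
  have fin: "finite (supp a)" "finite (supp a')" "finite (supp b)" "finite (supp b')"
    using assms a'(1) b'(1) by (simp_all add: fsupp_iff)
  have "(\<lambda>Z. conv prd (\<lambda>Z. a Z - a' Z) b Z + conv prd a' (\<lambda>Z. b Z - b' Z) Z) \<in> R"
    using assms a' b' by (intro relsub_add conv_relsub_left conv_relsub_right)
  then have "(\<lambda>Z. conv prd a b Z - conv prd a' b' Z) \<in> R"
    using fin by (simp add: conv_diff_left conv_diff_right)
  then show ?thesis
    unfolding a'_def b'_def by (simp add: burnside_ring_def Let_def bclass_eqI)
qed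

end

lemma burnside_data_pullback:
  assumes "burnside_data valid2 isom2 decomp2 prd2 u2"
    and valid_iff: "\<And>X. valid1 X \<longleftrightarrow> valid2 (\<phi> X)"
    and isom_iff: "\<And>X Y. valid1 X \<Longrightarrow> valid1 Y \<Longrightarrow> isom1 X Y \<longleftrightarrow> isom2 (\<phi> X) (\<phi> Y)"
    and decomp_iff: "\<And>X S T. valid1 X \<Longrightarrow> valid1 S \<Longrightarrow> valid1 T \<Longrightarrow>
      decomp1 X S T \<longleftrightarrow> decomp2 (\<phi> X) (\<phi> S) (\<phi> T)"
    and prod_map: "\<And>X Y. \<phi> (prd1 X Y) = prd2 (\<phi> X) (\<phi> Y)"
    and "valid1 u1"
  shows "burnside_data valid1 isom1 decomp1 prd1 u1"
proof -
  interpret target: burnside_data valid2 isom2 decomp2 prd2 u2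
    by fact
  have valid_prod: "valid1 X \<Longrightarrow> valid1 Y \<Longrightarrow> valid1 (prd1 X Y)" for X Y
    by (simp add: valid_iff prod_map target.valid_prod)
  show ?thesis
    by unfold_locales
      (simp_all add: valid_prod isom_iff decomp_iff prod_map \<open>valid1 u1\<close>, simp_all add: valid_iff
        target.isom_prod_commute target.isom_prod_left target.decomp_prod_left)
qed

definition burnside_map :: "('p \<Rightarrow> bool) \<Rightarrow> ('p \<Rightarrow> 'p \<Rightarrow> bool) \<Rightarrow> ('p \<Rightarrow> 'p \<Rightarrow> 'p \<Rightarrow> bool)
    \<Rightarrow> ('o \<Rightarrow> 'p) \<Rightarrow> ('o \<Rightarrow> int) set \<Rightarrow> ('p \<Rightarrow> int) set" where
  "burnside_map valid isom decomp \<phi> A = bclass valid isom decomp (pushforward \<phi> (SOME a. a \<in> A))"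

locale burnside_additive_map =
  fixes valid1 :: "'o \<Rightarrow> bool" and isom1 :: "'o \<Rightarrow> 'o \<Rightarrow> bool" and decomp1 :: "'o \<Rightarrow> 'o \<Rightarrow> 'o \<Rightarrow> bool"
    and valid2 :: "'p \<Rightarrow> bool" and isom2 :: "'p \<Rightarrow> 'p \<Rightarrow> bool" and decomp2 :: "'p \<Rightarrow> 'p \<Rightarrow> 'p \<Rightarrow> bool"
    and \<phi> :: "'o \<Rightarrow> 'p"
  assumes valid_map: "valid1 X \<Longrightarrow> valid2 (\<phi> X)"
    and isom_map: "valid1 X \<Longrightarrow> valid1 Y \<Longrightarrow> isom1 X Y \<Longrightarrow> isom2 (\<phi> X) (\<phi> Y)"
    and decomp_map: "valid1 X \<Longrightarrow> valid1 S \<Longrightarrow> valid1 T \<Longrightarrow> decomp1 X S T \<Longrightarrow>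
      decomp2 (\<phi> X) (\<phi> S) (\<phi> T)"
begin

lemma pushforward_fsupp: "a \<in> fsupp valid1 \<Longrightarrow> pushforward \<phi> a \<in> fsupp valid2"
  using supp_pushforward[of \<phi> a] by (auto simp: fsupp_iff valid_map intro: finite_subset)

lemma pushforward_relsub:
  "r \<in> relsub valid1 isom1 decomp1 \<Longrightarrow> pushforward \<phi> r \<in> relsub valid2 isom2 decomp2"
proof (induction rule: relsub.induct)
  case rel_zero
  then show ?case by (simp add: pushforward_def relsub.rel_zero)
next
  case (rel_iso X Y)
  then show ?case
    by (simp add: pushforward_diff pushforward_delta valid_map isom_map relsub.rel_iso)
next
  case (rel_decomp X S T)
  then show ?case
    by (simp add: pushforward_diff pushforward_delta finite_subset[OF supp_diff] valid_map decomp_map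
        relsub.rel_decomp)
next
  case (rel_diff a c)
  then show ?case
    using relsub_fsupp[OF rel_diff.hyps(1)] relsub_fsupp[OF rel_diff.hyps(2)]
    by (simp add: pushforward_diff fsupp_iff relsub.rel_diff)
qed

lemma burnside_map_bclass:
  assumes "a \<in> fsupp valid1"
  shows "burnside_map valid2 isom2 decomp2 \<phi> (bclass valid1 isom1 decomp1 a)
    = bclass valid2 isom2 decomp2 (pushforward \<phi> a)"
proof -
  define a' where "a' = (SOME c. c \<in> bclass valid1 isom1 decomp1 a)"
  have a': "a' \<in> fsupp valid1" "(\<lambda>Z. a Z - a' Z) \<in> relsub valid1 isom1 decomp1"
    unfolding a'_def using some_in_bclass assms by metis+
  then have "(\<lambda>Z. pushforward \<phi> a Z - pushforward \<phi> a' Z) \<in> relsub valid2 isom2 decomp2"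
    using pushforward_relsub[OF a'(2)] assms by (simp add: pushforward_diff fsupp_iff)
  then show ?thesis
    unfolding burnside_map_def a'_def[symmetric] by (simp add: bclass_eqI)
qed

end

lemma burnside_map_retraction:
  assumes "burnside_additive_map valid1 isom1 decomp1 valid2 isom2 decomp2 \<phi>"
    and "burnside_additive_map valid2 isom2 decomp2 valid1 isom1 decomp1 \<psi>"
    and "\<And>X. valid1 X \<Longrightarrow> \<psi> (\<phi> X) = X"
    and "A \<in> carrier (burnside_ring valid1 isom1 decomp1 prd u)"
  shows "burnside_map valid1 isom1 decomp1 \<psi> (burnside_map valid2 isom2 decomp2 \<phi> A) = A"
proof -
  obtain a where a: "a \<in> fsupp valid1" "A = bclass valid1 isom1 decomp1 a"
    using assms(4) by (auto simp: burnside_ring_carrier)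
  then have "pushforward \<psi> (pushforward \<phi> a) = a"
    using assms(3) by (simp add: pushforward_comp fsupp_iff pushforward_cong[of a "\<psi> \<circ> \<phi>" id]
        pushforward_id)
  with a assms(1,2) show ?thesis
    by (simp add: burnside_additive_map.burnside_map_bclass burnside_additive_map.pushforward_fsupp)
qed

locale burnside_ring_map = burnside_additive_map valid1 isom1 decomp1 valid2 isom2 decomp2 \<phi>
  + source: burnside_data valid1 isom1 decomp1 prd1 u1
  + target: burnside_data valid2 isom2 decomp2 prd2 u2
  for valid1 isom1 decomp1 prd1 u1 valid2 isom2 decomp2 prd2 u2 \<phi> +
  assumes prod_map: "valid1 X \<Longrightarrow> valid1 Y \<Longrightarrow> \<phi> (prd1 X Y) = prd2 (\<phi> X) (\<phi> Y)"
    and unit_map: "isom2 (\<phi> u1) u2"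
begin

theorem burnside_map_ring_hom:
  "burnside_map valid2 isom2 decomp2 \<phi>
    \<in> ring_hom (burnside_ring valid1 isom1 decomp1 prd1 u1) (burnside_ring valid2 isom2 decomp2 prd2 u2)"
proof (rule ring_hom_memI)
  let ?B1 = "burnside_ring valid1 isom1 decomp1 prd1 u1"
    and ?B2 = "burnside_ring valid2 isom2 decomp2 prd2 u2"
    and ?F = "burnside_map valid2 isom2 decomp2 \<phi>"
  show "?F A \<in> carrier ?B2" if "A \<in> carrier ?B1" for A
    using that by (auto simp: burnside_ring_carrier burnside_map_bclass pushforward_fsupp)
  show "?F (A \<otimes>\<^bsub>?B1\<^esub> B) = ?F A \<otimes>\<^bsub>?B2\<^esub> ?F B"
    if AB: "A \<in> carrier ?B1" "B \<in> carrier ?B1" for A B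
  proof -
    obtain a b where ab: "a \<in> fsupp valid1" "b \<in> fsupp valid1"
      and "A = bclass valid1 isom1 decomp1 a" "B = bclass valid1 isom1 decomp1 b"
      using AB unfolding burnside_ring_carrier by blast
    moreover have "pushforward \<phi> (conv prd1 a b) = conv prd2 (pushforward \<phi> a) (pushforward \<phi> b)"
      using ab by (intro pushforward_conv) (auto simp: fsupp_iff prod_map)
    ultimately show ?thesis
      by (simp add: burnside_map_bclass source.conv_fsupp pushforward_fsupp
          source.burnside_ring_mult_bclass target.burnside_ring_mult_bclass)
  qed
  show "?F (A \<oplus>\<^bsub>?B1\<^esub> B) = ?F A \<oplus>\<^bsub>?B2\<^esub> ?F B"
    if AB: "A \<in> carrier ?B1" "B \<in> carrier ?B1" for A B
  proof -
    obtain a b where ab: "a \<in> fsupp valid1" "b \<in> fsupp valid1"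
      and "A = bclass valid1 isom1 decomp1 a" "B = bclass valid1 isom1 decomp1 b"
      using AB unfolding burnside_ring_carrier by blast
    moreover have "pushforward \<phi> (\<lambda>Z. a Z + b Z) = (\<lambda>W. pushforward \<phi> a W + pushforward \<phi> b W)"
      using ab by (intro pushforward_add) (auto simp: fsupp_iff)
    ultimately show ?thesis
      by (simp add: burnside_map_bclass fsupp_add pushforward_fsupp burnside_ring_add_bclass)
  qed
  have "(\<lambda>Z. delta (\<phi> u1) Z - delta u2 Z) \<in> relsub valid2 isom2 decomp2"
    by (simp add: relsub.rel_iso valid_map source.valid_unit target.valid_unit unit_map)
  then show "?F \<one>\<^bsub>?B1\<^esub> = \<one>\<^bsub>?B2\<^esub>"
    by (simp add: burnside_ring_one burnside_map_bclass fsupp_iff source.valid_unit pushforward_delta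
        bclass_eqI)
qed

end

section \<open>Products of finite racks\<close>

lemma bij_betw_prod_encode_conj:
  assumes "bij_betw h A B"
  shows "bij_betw (\<lambda>n. prod_encode (h (prod_decode n))) (prod_encode ` A) (prod_encode ` B)"
proof -
  have "bij_betw prod_decode (prod_encode ` A) A"
    by (rule bij_betw_imageI) (auto simp: inj_on_def image_image)
  moreover have "bij_betw prod_encode B (prod_encode ` B)"
    by (rule inj_on_imp_bij_betw) (simp add: inj_on_def)
  ultimately have "bij_betw (prod_encode \<circ> h \<circ> prod_decode) (prod_encode ` A) (prod_encode ` B)"
    using assms by (blast intro: bij_betw_trans)
  then show ?thesis
    by (simp add: comp_def)
qed

lemma fst_rack_prod: "fst (rack_prod R Q) = prod_encode ` (fst R \<times> fst Q)"
  by (simp add: rack_prod_def)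

lemma rack_prod_apply:
  "snd (rack_prod R Q) (prod_encode (a, a'))
    = (\<lambda>m. prod_encode (map_prod (snd R a) (snd Q a') (prod_decode m)))"
  by (simp add: rack_prod_def map_prod_def case_prod_beta)

lemma rack_valid_prod:
  assumes "rack_valid R" "rack_valid Q"
  shows "rack_valid (rack_prod R Q)"
  using assms unfolding rack_valid_def fst_rack_prod
  by (auto simp: rack_prod_apply intro!: bij_betw_prod_encode_conj bij_betw_map_prod)

lemma rack_iso_prod_commute: "rack_iso (rack_prod R Q) (rack_prod Q R)"
proof -
  have "bij_betw prod.swap (fst R \<times> fst Q) (fst Q \<times> fst R)"
    by (auto simp: bij_betw_def inj_on_def product_swap)
  then show ?thesis
    unfolding rack_iso_def fst_rack_prod
    by (intro exI[of _ "\<lambda>n. prod_encode (prod.swap (prod_decode n))"])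
      (auto simp: rack_prod_apply intro: bij_betw_prod_encode_conj)
qed

lemma rack_iso_prod_left:
  assumes "rack_iso R R'"
  shows "rack_iso (rack_prod R Q) (rack_prod R' Q)"
proof -
  obtain h where h: "bij_betw h (fst R) (fst R')"
    "\<forall>a\<in>fst R. \<forall>b\<in>fst R. h (snd R a b) = snd R' (h a) (h b)"
    using assms by (auto simp: rack_iso_def)
  then show ?thesis
    unfolding rack_iso_def fst_rack_prod
    by (intro exI[of _ "\<lambda>n. prod_encode (map_prod h id (prod_decode n))"])
      (auto simp: rack_prod_apply intro: bij_betw_prod_encode_conj bij_betw_map_prod)
qed

lemma is_subrack_prod:
  assumes "is_subrack R S" "rack_valid Q"
  shows "is_subrack (rack_prod R Q) (prod_encode ` (S \<times> fst Q))"
  unfolding is_subrack_def fst_rack_prod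
proof (intro conjI ballI)
  show "prod_encode ` (S \<times> fst Q) \<subseteq> prod_encode ` (fst R \<times> fst Q)"
    using assms(1) by (auto simp: is_subrack_def)
next
  fix n assume "n \<in> prod_encode ` (S \<times> fst Q)"
  then obtain s q where n: "n = prod_encode (s, q)" "s \<in> S" "q \<in> fst Q"
    by auto
  have "snd (rack_prod R Q) n ` prod_encode ` (S \<times> fst Q)
      = prod_encode ` map_prod (snd R s) (snd Q q) ` (S \<times> fst Q)"
    by (simp add: n(1) rack_prod_apply image_image)
  also have "map_prod (snd R s) (snd Q q) ` (S \<times> fst Q) = S \<times> fst Q"
    using assms n by (intro map_prod_surj_on) (auto simp: is_subrack_def rack_valid_def bij_betw_def)
  finally show "snd (rack_prod R Q) n ` prod_encode ` (S \<times> fst Q) = prod_encode ` (S \<times> fst Q)" .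
qed

lemma rack_decomp_prod_left:
  assumes "rack_decomp R S T" "rack_valid Q"
  shows "rack_decomp (rack_prod R Q) (rack_prod S Q) (rack_prod T Q)"
proof -
  have "snd (rack_prod S Q) = snd (rack_prod R Q)" "snd (rack_prod T Q) = snd (rack_prod R Q)"
    using assms(1) by (simp_all add: rack_decomp_def rack_prod_def)
  moreover have "prod_encode ` (fst S \<times> fst Q) \<inter> prod_encode ` (fst T \<times> fst Q) = {}"
    using assms(1) by (auto simp: rack_decomp_def)
  ultimately show ?thesis
    using assms
    by (auto simp: rack_decomp_def fst_rack_prod is_subrack_prod Sigma_Un_distrib1 image_Un)
qed

lemma burnside_data_rack: "burnside_data rack_valid rack_iso rack_decomp rack_prod rack_unit"
  by unfold_locales
    (auto simp: rack_valid_prod rack_iso_prod_commute rack_iso_prod_left rack_decomp_prod_left,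
      simp add: rack_valid_def rack_unit_def bij_betw_def)

section \<open>Permutation racks and the diagonal permutation\<close>

definition permutation_rack :: "zset \<Rightarrow> rack" where
  "permutation_rack X = (fst X, \<lambda>_. snd X)"

definition diagonal_zset :: "rack \<Rightarrow> zset" where
  "diagonal_zset R = (fst R, \<lambda>a. snd R a a)"

lemma rack_valid_permutation_rack: "rack_valid (permutation_rack X) \<longleftrightarrow> zset_valid X"
  by (auto simp: rack_valid_def zset_valid_def permutation_rack_def bij_betw_def)

lemma rack_iso_permutation_rack: "rack_iso (permutation_rack X) (permutation_rack Y) \<longleftrightarrow> zset_iso X Y"
  by (auto simp: rack_iso_def zset_iso_def permutation_rack_def)

lemma rack_decomp_permutation_rack:
  "rack_decomp (permutation_rack X) (permutation_rack S) (permutation_rack T) \<longleftrightarrow> zset_decomp X S T"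
  by (auto simp: rack_decomp_def zset_decomp_def is_subrack_def permutation_rack_def fun_eq_iff)

lemma permutation_rack_prod:
  "permutation_rack (zset_prod X Y) = rack_prod (permutation_rack X) (permutation_rack Y)"
  by (simp add: permutation_rack_def zset_prod_def rack_prod_def case_prod_beta)

lemma burnside_data_zset: "burnside_data zset_valid zset_iso zset_decomp zset_prod zset_unit"
  by (rule burnside_data_pullback[OF burnside_data_rack, where \<phi> = permutation_rack])
    (simp_all add: rack_valid_permutation_rack rack_iso_permutation_rack rack_decomp_permutation_rack
      permutation_rack_prod zset_valid_def zset_unit_def)

lemma permutation_rack_unit: "rack_iso (permutation_rack zset_unit) rack_unit"
  unfolding rack_iso_def
  by (intro exI[of _ id]) (simp add: permutation_rack_def zset_unit_def rack_unit_def)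

lemma permutation_rack_ring_map:
  "burnside_ring_map zset_valid zset_iso zset_decomp zset_prod zset_unit
    rack_valid rack_iso rack_decomp rack_prod rack_unit permutation_rack"
  by (intro burnside_ring_map.intro burnside_additive_map.intro burnside_ring_map_axioms.intro
      burnside_data_zset burnside_data_rack)
    (simp_all add: rack_valid_permutation_rack rack_iso_permutation_rack rack_decomp_permutation_rack
      permutation_rack_prod permutation_rack_unit)

lemma rack_square_action:
  assumes "rack_valid R" "a \<in> fst R" "x \<in> fst R"
  shows "snd R (snd R a a) x = snd R a x"
proof -
  have "x \<in> snd R a ` fst R"
    using assms by (simp add: rack_valid_def bij_betw_def)
  then obtain b where b: "b \<in> fst R" "x = snd R a b"
    by blast
  then show ?thesis
    using assms by (simp add: rack_valid_def)
qed

lemma inj_on_rack_diagonal: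
  assumes "rack_valid R"
  shows "inj_on (\<lambda>a. snd R a a) (fst R)"
proof (rule inj_onI)
  fix a b assume ab: "a \<in> fst R" "b \<in> fst R" and eq: "snd R a a = snd R b b"
  have "snd R a b = snd R (snd R b b) b"
    using rack_square_action[OF assms ab(1,2)] eq by simp
  also have "\<dots> = snd R a a"
    using rack_square_action[OF assms ab(2,2)] eq by simp
  finally show "a = b"
    using assms ab by (auto simp: rack_valid_def bij_betw_def dest: inj_onD)
qed

lemma rack_diagonal_subrack:
  assumes "rack_valid R" "is_subrack R S"
  shows "(\<lambda>a. snd R a a) ` S = S"
proof (rule endo_inj_surj)
  show "finite S" "inj_on (\<lambda>a. snd R a a) S"
    using assms inj_on_rack_diagonal[OF assms(1)]
    by (auto simp: rack_valid_def is_subrack_def intro: finite_subset inj_on_subset)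
  show "(\<lambda>a. snd R a a) ` S \<subseteq> S"
    using assms(2) by (auto simp: is_subrack_def)
qed

lemma zset_valid_diagonal: "rack_valid R \<Longrightarrow> zset_valid (diagonal_zset R)"
  using inj_on_rack_diagonal rack_diagonal_subrack[of R "fst R"]
  by (auto simp: zset_valid_def diagonal_zset_def bij_betw_def is_subrack_def rack_valid_def)

lemma zset_iso_diagonal: "rack_iso R Q \<Longrightarrow> zset_iso (diagonal_zset R) (diagonal_zset Q)"
  by (auto simp: rack_iso_def zset_iso_def diagonal_zset_def bij_betw_def)

lemma zset_decomp_diagonal:
  "rack_valid R \<Longrightarrow> rack_decomp R S T \<Longrightarrow> zset_decomp (diagonal_zset R) (diagonal_zset S) (diagonal_zset T)"
  by (simp add: rack_decomp_def zset_decomp_def diagonal_zset_def rack_diagonal_subrack)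

lemma diagonal_zset_prod: "diagonal_zset (rack_prod R Q) = zset_prod (diagonal_zset R) (diagonal_zset Q)"
  by (simp add: diagonal_zset_def zset_prod_def rack_prod_def case_prod_beta)

lemma diagonal_zset_unit: "zset_iso (diagonal_zset rack_unit) zset_unit"
  unfolding zset_iso_def
  by (intro exI[of _ id]) (simp add: diagonal_zset_def zset_unit_def rack_unit_def)

lemma diagonal_permutation_rack: "diagonal_zset (permutation_rack X) = X"
  by (simp add: diagonal_zset_def permutation_rack_def)

lemma diagonal_zset_ring_map:
  "burnside_ring_map rack_valid rack_iso rack_decomp rack_prod rack_unit
    zset_valid zset_iso zset_decomp zset_prod zset_unit diagonal_zset"
  by (intro burnside_ring_map.intro burnside_additive_map.intro burnside_ring_map_axioms.intro
      burnside_data_zset burnside_data_rack)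
    (simp_all add: zset_valid_diagonal zset_iso_diagonal zset_decomp_diagonal diagonal_zset_prod
      diagonal_zset_unit)

theorem proposition6p3:
  shows "\<exists>f g. f \<in> ring_hom BZ BR \<and> g \<in> ring_hom BR BZ \<and>
           (\<forall>x\<in>carrier BZ. g (f x) = x)"
proof (intro exI conjI ballI)
  show "burnside_map rack_valid rack_iso rack_decomp permutation_rack \<in> ring_hom BZ BR"
    unfolding BZ_def BR_def by (rule burnside_ring_map.burnside_map_ring_hom[OF permutation_rack_ring_map])
  show "burnside_map zset_valid zset_iso zset_decomp diagonal_zset \<in> ring_hom BR BZ"
    unfolding BZ_def BR_def by (rule burnside_ring_map.burnside_map_ring_hom[OF diagonal_zset_ring_map])
  show "burnside_map zset_valid zset_iso zset_decomp diagonal_zset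
      (burnside_map rack_valid rack_iso rack_decomp permutation_rack x) = x"
    if "x \<in> carrier BZ" for x
    using that unfolding BZ_def
    by (intro burnside_map_retraction diagonal_permutation_rack
        burnside_ring_map.axioms(1)[OF permutation_rack_ring_map]
        burnside_ring_map.axioms(1)[OF diagonal_zset_ring_map])
qed

end
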